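(* Let $a=\sum_{t=0}^7a_te_t\in C\ell_{1,2}$. Then its Moore–Penrose inverse is $$a^+=\begin{cases}0, & \text{if } a=0;\\[2pt] \dfrac{N(a)-2T(a)e_7}{P(a)}\,\bar a, & \text{if } P(a)\neq 0;\\[6pt] \dfrac{a'}{4(a_0^2+a_2^2+a_4^2+a_6^2)}, & \text{if } a\neq 0 \text{ and } P(a)=0.\end{cases}$$
   Context: $C\ell_{1,2}$ is the real Clifford algebra generated by $i_1,i_2,i_3$ with $i_1^2=1$, $i_2^2=i_3^2=-1$ and $i_ti_m=-i_mi_t$ for $t\neq m$, with real basis $e_0=1$, $e_1=i_1$, $e_2=i_2$, $e_3=i_1i_2$, $e_4=i_3$, $e_5=i_1i_3$, $e_6=i_2i_3$, $e_7=i_1i_2i_3$. For $a=\sum_{t=0}^7 a_te_t$ ($a_t\in\mathbb{R}$) define: the conjugate $\bar a=a_0-a_1e_1-a_2e_2-a_3e_3-a_4e_4-a_5e_5-a_6e_6+a_7e_7$; the prime $a'=a_0+a_1e_1-a_2e_2+a_3e_3-a_4e_4+a_5e_5-a_6e_6-a_7e_7$; $N(a)=a_0^2-a_1^2+a_2^2-a_3^2+a_4^2-a_5^2+a_6^2-a_7^2$; $T(a)=a_0a_7+a_2a_5-a_1a_6-a_3a_4$; $P(a)=N(a)^2+4T(a)^2$. For every $a\in C\ell_{1,2}$ there is a unique $x\in C\ell_{1,2}$ with $axa=a$, $xax=x$, $(ax)'=ax$, $(xa)'=xa$; it is called the Moore–Penrose inverse of $a$ and denoted $a^+$. *)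

theory Defs
  imports Main Complex_Main
begin

text \<open>The real Clifford algebra Cl(1,2): an element is given by its 8 real
coordinates with respect to the basis e0 = 1, e1 = i1, e2 = i2, e3 = i1 i2,
e4 = i3, e5 = i1 i3, e6 = i2 i3, e7 = i1 i2 i3.  The product is the bilinear
extension of the product of basis blades determined by i1^2 = 1,
i2^2 = i3^2 = -1 and i_t i_m = - i_m i_t (t ~= m).\<close>

datatype cl12 = Cl (c0: real) (c1: real) (c2: real) (c3: real)
                   (c4: real) (c5: real) (c6: real) (c7: real)

instantiation cl12 :: "{zero, one, plus, minus, uminus, times}"
begin

definition zero_cl12 :: cl12 where "0 = Cl 0 0 0 0 0 0 0 0"
definition one_cl12 :: cl12 where "1 = Cl 1 0 0 0 0 0 0 0"

fun plus_cl12 :: "cl12 \<Rightarrow> cl12 \<Rightarrow> cl12" where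
  "Cl a0 a1 a2 a3 a4 a5 a6 a7 + Cl b0 b1 b2 b3 b4 b5 b6 b7 =
     Cl (a0+b0) (a1+b1) (a2+b2) (a3+b3) (a4+b4) (a5+b5) (a6+b6) (a7+b7)"

fun minus_cl12 :: "cl12 \<Rightarrow> cl12 \<Rightarrow> cl12" where
  "Cl a0 a1 a2 a3 a4 a5 a6 a7 - Cl b0 b1 b2 b3 b4 b5 b6 b7 =
     Cl (a0-b0) (a1-b1) (a2-b2) (a3-b3) (a4-b4) (a5-b5) (a6-b6) (a7-b7)"

fun uminus_cl12 :: "cl12 \<Rightarrow> cl12" where
  "- Cl a0 a1 a2 a3 a4 a5 a6 a7 = Cl (-a0) (-a1) (-a2) (-a3) (-a4) (-a5) (-a6) (-a7)"

fun times_cl12 :: "cl12 \<Rightarrow> cl12 \<Rightarrow> cl12" where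
  "Cl a0 a1 a2 a3 a4 a5 a6 a7 * Cl b0 b1 b2 b3 b4 b5 b6 b7 =
     Cl (a0*b0 + a1*b1 - a2*b2 + a3*b3 - a4*b4 + a5*b5 - a6*b6 - a7*b7)
        (a0*b1 + a1*b0 + a2*b3 - a3*b2 + a4*b5 - a5*b4 - a6*b7 - a7*b6)
        (a0*b2 + a1*b3 + a2*b0 - a3*b1 + a4*b6 - a5*b7 - a6*b4 - a7*b5)
        (a0*b3 + a1*b2 - a2*b1 + a3*b0 - a4*b7 + a5*b6 - a6*b5 - a7*b4)
        (a0*b4 + a1*b5 - a2*b6 + a3*b7 + a4*b0 - a5*b1 + a6*b2 + a7*b3)
        (a0*b5 + a1*b4 + a2*b7 - a3*b6 - a4*b1 + a5*b0 + a6*b3 + a7*b2)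
        (a0*b6 + a1*b7 + a2*b4 - a3*b5 - a4*b2 + a5*b3 + a6*b0 + a7*b1)
        (a0*b7 + a1*b6 - a2*b5 + a3*b4 + a4*b3 - a5*b2 + a6*b1 + a7*b0)"

instance ..
end

fun clscale :: "real \<Rightarrow> cl12 \<Rightarrow> cl12" where
  "clscale r (Cl a0 a1 a2 a3 a4 a5 a6 a7) =
     Cl (r*a0) (r*a1) (r*a2) (r*a3) (r*a4) (r*a5) (r*a6) (r*a7)"

definition e1 :: cl12 where "e1 = Cl 0 1 0 0 0 0 0 0"
definition e2 :: cl12 where "e2 = Cl 0 0 1 0 0 0 0 0"
definition e3 :: cl12 where "e3 = Cl 0 0 0 1 0 0 0 0"
definition e4 :: cl12 where "e4 = Cl 0 0 0 0 1 0 0 0"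
definition e5 :: cl12 where "e5 = Cl 0 0 0 0 0 1 0 0"
definition e6 :: cl12 where "e6 = Cl 0 0 0 0 0 0 1 0"
definition e7 :: cl12 where "e7 = Cl 0 0 0 0 0 0 0 1"

lemma cl12_relations:
  "e1 * e1 = 1" "e2 * e2 = - 1" "e4 * e4 = - 1"
  "e1 * e2 = - (e2 * e1)" "e1 * e4 = - (e4 * e1)" "e2 * e4 = - (e4 * e2)"
  "e3 = e1 * e2" "e5 = e1 * e4" "e6 = e2 * e4" "e7 = e1 * e2 * e4"
  by (simp_all add: e1_def e2_def e3_def e4_def e5_def e6_def e7_def
      one_cl12_def)

lemma cl12_one_mult: "1 * x = x" "x * (1::cl12) = x"
  by (cases x; simp add: one_cl12_def)+

fun clconj :: "cl12 \<Rightarrow> cl12" where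
  "clconj (Cl a0 a1 a2 a3 a4 a5 a6 a7) =
     Cl a0 (-a1) (-a2) (-a3) (-a4) (-a5) (-a6) a7"

fun clprime :: "cl12 \<Rightarrow> cl12" where
  "clprime (Cl a0 a1 a2 a3 a4 a5 a6 a7) =
     Cl a0 a1 (-a2) a3 (-a4) a5 (-a6) (-a7)"

fun clN :: "cl12 \<Rightarrow> real" where
  "clN (Cl a0 a1 a2 a3 a4 a5 a6 a7) =
     a0^2 - a1^2 + a2^2 - a3^2 + a4^2 - a5^2 + a6^2 - a7^2"

fun clT :: "cl12 \<Rightarrow> real" where
  "clT (Cl a0 a1 a2 a3 a4 a5 a6 a7) = a0*a7 + a2*a5 - a1*a6 - a3*a4"

definition clP :: "cl12 \<Rightarrow> real" where
  "clP a = (clN a)^2 + 4 * (clT a)^2"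

definition mpinv :: "cl12 \<Rightarrow> cl12" where
  "mpinv a = (THE x. a * x * a = a \<and> x * a * x = x \<and>
                     clprime (a * x) = a * x \<and> clprime (x * a) = x * a)"

end

theory Submission
  imports Defs
begin

(* Cl(1,2) is isomorphic to the 2x2 complex matrices: its centre span{1, e7} plays the role of
   the complex scalars (e7 * e7 = -1), the conjugate is the adjugate, the prime is the Hermitian
   adjoint, and a * conj a = N(a) + 2 T(a) e7 is the determinant, of squared modulus P(a).
   If P(a) ~= 0, then a is invertible with inverse (N - 2 T e7) conj a / P, which is also its
   Moore-Penrose inverse.  If P(a) = 0, then a * conj a = 0; as x + conj x is central (the trace),
   a a' a = a (tr(a' a) - conj(a' a)) = tr(a' a) a - (a conj a) conj(a') = 2 |a|^2 a, so a' / (2 |a|^2)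
   is the Moore-Penrose inverse, and 2 |a|^2 = 4 (a0^2 + a2^2 + a4^2 + a6^2) because N(a) = 0. *)

instantiation cl12 :: real_algebra_1
begin

definition scaleR_cl12 :: "real \<Rightarrow> cl12 \<Rightarrow> cl12" where
  "scaleR_cl12 = clscale"

instance proof
  fix x y z :: cl12 and r s :: real
  show "x + y + z = x + (y + z)" "x + y = y + x" "0 + x = x" "- x + x = 0" "x - y = x + - y"
    by (cases x; cases y; cases z; simp add: zero_cl12_def)+
  show "x * y * z = x * (y * z)" "(x + y) * z = x * z + y * z" "x * (y + z) = x * y + x * z"
    by (cases x; cases y; cases z; simp add: algebra_simps)+
  show "1 * x = x" "x * 1 = x" by (fact cl12_one_mult)+
  show "(0::cl12) \<noteq> 1" by (simp add: zero_cl12_def one_cl12_def)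
  show "r *\<^sub>R (x + y) = r *\<^sub>R x + r *\<^sub>R y" "(r + s) *\<^sub>R x = r *\<^sub>R x + s *\<^sub>R x"
    "r *\<^sub>R s *\<^sub>R x = (r * s) *\<^sub>R x" "1 *\<^sub>R x = x"
    "r *\<^sub>R x * y = r *\<^sub>R (x * y)" "x * r *\<^sub>R y = r *\<^sub>R (x * y)"
    by (cases x; cases y; simp add: scaleR_cl12_def algebra_simps)+
qed

end

definition is_mp_inverse :: "('a::semigroup_mult \<Rightarrow> 'a) \<Rightarrow> 'a \<Rightarrow> 'a \<Rightarrow> bool" where
  "is_mp_inverse star a x \<longleftrightarrow>
     a * x * a = a \<and> x * a * x = x \<and> star (a * x) = a * x \<and> star (x * a) = x * a"

lemma mp_inverse_unique:
  assumes star_mult: "\<And>u v. star (u * v) = star v * star u"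
    and x: "is_mp_inverse star a x" and y: "is_mp_inverse star a y"
  shows "x = y"
proof -
  have axa: "a * x * a = a" and xax: "x * a * x = x"
    and ax: "star (a * x) = a * x" and xa: "star (x * a) = x * a"
    using x by (simp_all add: is_mp_inverse_def)
  have aya: "a * y * a = a" and yay: "y * a * y = y"
    and ay: "star (a * y) = a * y" and ya: "star (y * a) = y * a"
    using y by (simp_all add: is_mp_inverse_def)
  have "x = x * star (a * x)"
    using xax ax by (simp add: mult.assoc)
  also have "\<dots> = x * star x * star (a * y * a)"
    using aya by (simp add: star_mult mult.assoc)
  also have "\<dots> = x * star (a * x) * star (a * y)"
    by (simp add: star_mult mult.assoc)
  also have "\<dots> = x * (a * x * a) * y"
    using ax ay by (simp add: mult.assoc)
  also have "\<dots> = x * a * y"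
    using axa by simp
  finally have x_eq: "x = x * a * y" .
  have "y = star (y * a) * y"
    using yay ya by simp
  also have "\<dots> = star (a * x * a) * star y * y"
    using axa by (simp add: star_mult)
  also have "\<dots> = star (x * a) * star (y * a) * y"
    by (simp add: star_mult mult.assoc)
  also have "\<dots> = x * a * (y * a * y)"
    using xa ya by (simp add: mult.assoc)
  also have "\<dots> = x * a * y"
    using yay by simp
  finally show ?thesis
    using x_eq by simp
qed

lemma is_mp_inverse_0:
  "star 0 = 0 \<Longrightarrow> is_mp_inverse star (0::'a::{semigroup_mult, mult_zero}) 0"
  by (simp add: is_mp_inverse_def)

lemma is_mp_inverse_inverse:
  "star 1 = 1 \<Longrightarrow> a * x = 1 \<Longrightarrow> x * a = 1 \<Longrightarrow> is_mp_inverse star (a::'a::monoid_mult) x"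
  by (simp add: is_mp_inverse_def)

lemma is_mp_inverse_scaled_star:
  fixes a :: "'a::real_algebra_1"
  assumes star_mult: "\<And>u v. star (u * v) = star v * star u"
    and star_star: "\<And>u. star (star u) = u"
    and star_scaleR: "\<And>r u. star (r *\<^sub>R u) = r *\<^sub>R star u"
    and a_star_a: "a * star a * a = s *\<^sub>R a" and "s \<noteq> 0"
  shows "is_mp_inverse star a ((1 / s) *\<^sub>R star a)"
proof -
  have "star a * a * star a = s *\<^sub>R star a"
    using arg_cong[OF a_star_a, of star] by (simp add: star_mult star_star star_scaleR mult.assoc)
  with a_star_a \<open>s \<noteq> 0\<close> show ?thesis
    by (simp add: is_mp_inverse_def star_mult star_star star_scaleR)
qed

lemma clprime_mult: "clprime (x * y) = clprime y * clprime x"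
  by (cases x; cases y; simp add: algebra_simps)

lemma clprime_clprime: "clprime (clprime x) = x"
  by (cases x) simp

lemma clprime_scaleR: "clprime (r *\<^sub>R x) = r *\<^sub>R clprime x"
  by (cases x) (simp add: scaleR_cl12_def)

lemma clprime_0: "clprime 0 = 0"
  by (simp add: zero_cl12_def)

lemma clprime_1: "clprime 1 = 1"
  by (simp add: one_cl12_def)

lemma clconj_mult: "clconj (x * y) = clconj y * clconj x"
  by (cases x; cases y; simp add: algebra_simps)

lemma e7_commute: "e7 * x = x * e7"
  by (cases x) (simp add: e7_def)

lemma mult_clconj_self: "a * clconj a = clN a *\<^sub>R 1 + (2 * clT a) *\<^sub>R e7"
  by (cases a) (simp add: scaleR_cl12_def e7_def one_cl12_def power2_eq_square algebra_simps)

lemma clconj_mult_self: "clconj a * a = clN a *\<^sub>R 1 + (2 * clT a) *\<^sub>R e7"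
  by (cases a) (simp add: scaleR_cl12_def e7_def one_cl12_def power2_eq_square algebra_simps)

lemma center_conj_mult:
  "(n *\<^sub>R 1 - t *\<^sub>R e7) * (n *\<^sub>R 1 + t *\<^sub>R e7) = (n\<^sup>2 + t\<^sup>2) *\<^sub>R (1::cl12)"
  by (simp add: scaleR_cl12_def e7_def one_cl12_def power2_eq_square)

lemma center_commute: "(n *\<^sub>R 1 + t *\<^sub>R e7) * x = x * (n *\<^sub>R 1 + t *\<^sub>R e7)"
  by (simp add: algebra_simps e7_commute)

definition clsqnorm :: "cl12 \<Rightarrow> real" where
  "clsqnorm a = (c0 a)\<^sup>2 + (c1 a)\<^sup>2 + (c2 a)\<^sup>2 + (c3 a)\<^sup>2 + (c4 a)\<^sup>2 + (c5 a)\<^sup>2 + (c6 a)\<^sup>2 + (c7 a)\<^sup>2"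

lemma clsqnorm_pos: "a \<noteq> 0 \<Longrightarrow> 0 < clsqnorm a"
  by (cases a) (simp add: clsqnorm_def zero_cl12_def less_le add_nonneg_eq_0_iff)

lemma clN_add_clsqnorm: "clN a + clsqnorm a = 2 * ((c0 a)\<^sup>2 + (c2 a)\<^sup>2 + (c4 a)\<^sup>2 + (c6 a)\<^sup>2)"
  by (cases a) (simp add: clsqnorm_def)

lemma clP_eq_0_iff: "clP a = 0 \<longleftrightarrow> clN a = 0 \<and> clT a = 0"
  by (simp add: clP_def add_nonneg_eq_0_iff)

lemma clprime_mult_self_add_clconj:
  "clprime a * a + clconj (clprime a * a) = (2 * clsqnorm a) *\<^sub>R 1"
  by (cases a) (simp add: clsqnorm_def scaleR_cl12_def one_cl12_def power2_eq_square)

lemma mult_clprime_mult_singular: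
  assumes "a * clconj a = 0"
  shows "a * clprime a * a = (2 * clsqnorm a) *\<^sub>R a"
proof -
  have "clprime a * a = (2 * clsqnorm a) *\<^sub>R 1 - clconj (clprime a * a)"
    using clprime_mult_self_add_clconj[of a] by (simp add: eq_diff_eq)
  then have "a * clprime a * a = a * ((2 * clsqnorm a) *\<^sub>R 1 - clconj (clprime a * a))"
    by (simp add: mult.assoc)
  also have "\<dots> = (2 * clsqnorm a) *\<^sub>R a - a * clconj a * clconj (clprime a)"
    by (simp add: clconj_mult right_diff_distrib mult.assoc)
  finally show ?thesis
    using assms by simp
qed

lemma mpinv_eqI: "is_mp_inverse clprime a x \<Longrightarrow> mpinv a = x"
  unfolding mpinv_def is_mp_inverse_def[symmetric]
  by (rule the_equality) (auto intro: mp_inverse_unique clprime_mult)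

lemma mpinv_0: "mpinv 0 = 0"
  by (intro mpinv_eqI is_mp_inverse_0 clprime_0)

lemma mpinv_nonsingular:
  assumes "clP a \<noteq> 0"
  shows "mpinv a = (1 / clP a) *\<^sub>R ((clN a *\<^sub>R 1 - (2 * clT a) *\<^sub>R e7) * clconj a)"
proof -
  define q where "q = clN a *\<^sub>R 1 - (2 * clT a) *\<^sub>R e7"
  have q_center: "q * x = x * q" for x
    using center_commute[of "clN a" "- 2 * clT a" x] by (simp add: q_def)
  have q_conj: "q * (a * clconj a) = clP a *\<^sub>R 1"
    by (simp add: q_def mult_clconj_self center_conj_mult clP_def power_mult_distrib)
  have "a * (q * clconj a) = q * (a * clconj a)"
    by (metis mult.assoc q_center)
  moreover have "q * clconj a * a = q * (a * clconj a)"
    by (simp add: mult.assoc clconj_mult_self mult_clconj_self)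
  ultimately have "a * (q * clconj a) = clP a *\<^sub>R 1" "q * clconj a * a = clP a *\<^sub>R 1"
    using q_conj by simp_all
  with assms have "is_mp_inverse clprime a ((1 / clP a) *\<^sub>R (q * clconj a))"
    by (intro is_mp_inverse_inverse clprime_1) simp_all
  then show ?thesis
    unfolding q_def by (rule mpinv_eqI)
qed

lemma mpinv_singular:
  assumes "a \<noteq> 0" "clP a = 0"
  shows "mpinv a = (1 / (4 * ((c0 a)\<^sup>2 + (c2 a)\<^sup>2 + (c4 a)\<^sup>2 + (c6 a)\<^sup>2))) *\<^sub>R clprime a"
proof -
  have N: "clN a = 0" and "clT a = 0"
    using assms(2) by (simp_all add: clP_eq_0_iff)
  then have "a * clprime a * a = (2 * clsqnorm a) *\<^sub>R a"
    by (intro mult_clprime_mult_singular) (simp add: mult_clconj_self)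
  moreover have "2 * clsqnorm a \<noteq> 0"
    using clsqnorm_pos[OF assms(1)] by simp
  ultimately have "is_mp_inverse clprime a ((1 / (2 * clsqnorm a)) *\<^sub>R clprime a)"
    by (intro is_mp_inverse_scaled_star clprime_mult clprime_clprime clprime_scaleR)
  moreover have "2 * clsqnorm a = 4 * ((c0 a)\<^sup>2 + (c2 a)\<^sup>2 + (c4 a)\<^sup>2 + (c6 a)\<^sup>2)"
    using clN_add_clsqnorm[of a] N by simp
  ultimately show ?thesis
    by (simp add: mpinv_eqI)
qed

theorem theorem3p1:
  fixes a :: cl12
  shows "mpinv a =
    (if a = 0 then 0
     else if clP a \<noteq> 0 then
       clscale (1 / clP a) ((clscale (clN a) 1 - clscale (2 * clT a) e7) * clconj a)
     else clscale (1 / (4 * ((c0 a)^2 + (c2 a)^2 + (c4 a)^2 + (c6 a)^2))) (clprime a))"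
  unfolding scaleR_cl12_def[symmetric]
  by (simp add: mpinv_0 mpinv_nonsingular mpinv_singular)

end
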